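(* Consider online binary classification with abstention with $d$ experts and arbitrary abstention costs $c_t$, and run AdaHedge with abstention. Then for every expert $i\in\{1,\dots,d\}$, $$\sum_{t=1}^T\big((1-b_t)\ell_t(y_t^\star)+b_tc_t\big)\le\sum_{t=1}^T\ell_t(y_t^i)+\inf_{\eta>0}\Big\{\frac{\ln d}{\eta}+\sum_{t=1}^T\big((1-b_t)\ell_t(y_t^\star)+c_tb_t+\eta v_t-\ell_t(\hat y_t)\big)\Big\}+\frac43\ln d+2,$$ where $v_t=\mathbb E_{i\sim\hat{\mathbf p}_t}\big[(\ell_t(\hat y_t)-\ell_t(y_t^i))^2\big]$.
   Context: Online classification with abstention: in each round $t=1,\dots,T$, the learner observes expert predictions $y_t^1,\dots,y_t^d\in[-1,1]$, predicts $y'_t\in[-1,1]\cup\{*\}$ ($*$ = abstain), the environment reveals $y_t\in\{-1,1\}$ and an abstention cost $c_t$, and the learner suffers $\ell_t(y'_t)=\frac12(1-y_ty'_t)$ if $y'_t\in[-1,1]$ and $c_t$ if $y'_t=*$. For expert $i$ its loss is $\ell_t(y_t^i)=\frac12(1-y_ty_t^i)\in[0,1]$. AdaHedge: with $L_{t,i}=\sum_{s<t}\ell_s(y_s^i)$, weights $\hat p_{t,i}\propto\exp(-\eta_tL_{t,i})$, where $\eta_t=\ln d/\Delta_{t-1}$ (and for $\Delta_{t-1}=0$ the weights are uniform over the experts minimizing $L_{t,i}$), $\Delta_t=\sum_{s\le t}\delta_s$, $\delta_s=h_s-m_s$, $h_s=\sum_i\hat p_{s,i}\ell_s(y_s^i)$,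 $m_s=-\frac1{\eta_s}\ln\sum_i\hat p_{s,i}e^{-\eta_s\ell_s(y_s^i)}$ (with $m_s=\min_{i:\hat p_{s,i}>0}\ell_s(y_s^i)$ when $\eta_s=\infty$). AdaHedge with abstention (Algorithm 2): in round $t$ obtain $\hat{\mathbf p}_t$ from AdaHedge, set $\hat y_t=\sum_i\hat p_{t,i}y_t^i$, $y_t^\star=\mathrm{sign}(\hat y_t)$, $b_t=1-|\hat y_t|$; predict $y'_t=y_t^\star$ with probability $1-b_t$ and abstain with probability $b_t$; then feed the expert losses $\ell_t(y_t^i)$ to AdaHedge. The quantity $(1-b_t)\ell_t(y_t^\star)+b_tc_t$ is the learner's expected loss in round $t$. *)

theory Defs
  imports Complex_Main
begin

text \<open>Experts are indexed by 0,...,d-1; rounds by 1,...,T.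
  The learner/expert classification loss: l(y, z) = (1 - y z)/2.\<close>

definition clf_loss :: "real \<Rightarrow> real \<Rightarrow> real" where
  "clf_loss y z = (1 - y * z) / 2"

definition cum_loss :: "(nat \<Rightarrow> nat \<Rightarrow> real) \<Rightarrow> nat \<Rightarrow> nat \<Rightarrow> real" where
  "cum_loss lossf t i = (\<Sum>s\<in>{1..<t}. lossf s i)"

text \<open>AdaHedge weights given the cumulative losses L and the value D = Delta_{t-1}:
  eta = ln d / D, and for D = 0 (eta = infinity) uniform over the minimizers of L.\<close>
definition ah_weights :: "nat \<Rightarrow> (nat \<Rightarrow> real) \<Rightarrow> real \<Rightarrow> nat \<Rightarrow> real" where
  "ah_weights d L D i =
     (if D = 0 then
        (let M = {j\<in>{..<d}. L j = (MIN k\<in>{..<d}. L k)}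
         in if i \<in> M then 1 / real (card M) else 0)
      else exp (- (ln (real d) / D) * L i) / (\<Sum>j<d. exp (- (ln (real d) / D) * L j)))"

definition ah_hedge :: "nat \<Rightarrow> (nat \<Rightarrow> real) \<Rightarrow> (nat \<Rightarrow> real) \<Rightarrow> real" where
  "ah_hedge d p l = (\<Sum>i<d. p i * l i)"

text \<open>Mix loss m = -(1/eta) ln sum_i p_i exp(-eta l_i), with eta = ln d / D;
  for D = 0 (eta = infinity) it is the minimum of l_i over i with p_i > 0.\<close>
definition ah_mix :: "nat \<Rightarrow> (nat \<Rightarrow> real) \<Rightarrow> (nat \<Rightarrow> real) \<Rightarrow> real \<Rightarrow> real" where
  "ah_mix d p l D =
     (if D = 0 then (MIN i\<in>{i\<in>{..<d}. p i > 0}. l i)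
      else - (1 / (ln (real d) / D)) * ln (\<Sum>i<d. p i * exp (- (ln (real d) / D) * l i)))"

text \<open>Delta_t = sum_{s<=t} delta_s, where round s = t+1 uses Delta_t.\<close>
primrec ah_Delta :: "nat \<Rightarrow> (nat \<Rightarrow> nat \<Rightarrow> real) \<Rightarrow> nat \<Rightarrow> real" where
  "ah_Delta d lossf 0 = 0"
| "ah_Delta d lossf (Suc t) =
     (let D = ah_Delta d lossf t;
          p = ah_weights d (cum_loss lossf (Suc t)) D;
          l = lossf (Suc t)
      in D + (ah_hedge d p l - ah_mix d p l D))"

definition ah_p :: "nat \<Rightarrow> (nat \<Rightarrow> nat \<Rightarrow> real) \<Rightarrow> nat \<Rightarrow> nat \<Rightarrow> real" where
  "ah_p d lossf t = ah_weights d (cum_loss lossf t) (ah_Delta d lossf (t - 1))"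

definition exp_loss :: "(nat \<Rightarrow> nat \<Rightarrow> real) \<Rightarrow> (nat \<Rightarrow> real) \<Rightarrow> nat \<Rightarrow> nat \<Rightarrow> real" where
  "exp_loss ys y t j = clf_loss (y t) (ys t j)"

definition aha_p :: "nat \<Rightarrow> (nat \<Rightarrow> nat \<Rightarrow> real) \<Rightarrow> (nat \<Rightarrow> real) \<Rightarrow> nat \<Rightarrow> nat \<Rightarrow> real" where
  "aha_p d ys y = ah_p d (exp_loss ys y)"

definition aha_yhat :: "nat \<Rightarrow> (nat \<Rightarrow> nat \<Rightarrow> real) \<Rightarrow> (nat \<Rightarrow> real) \<Rightarrow> nat \<Rightarrow> real" where
  "aha_yhat d ys y t = (\<Sum>j<d. aha_p d ys y t j * ys t j)"

definition aha_ystar :: "nat \<Rightarrow> (nat \<Rightarrow> nat \<Rightarrow> real) \<Rightarrow> (nat \<Rightarrow> real) \<Rightarrow> nat \<Rightarrow> real" where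
  "aha_ystar d ys y t = sgn (aha_yhat d ys y t)"

definition aha_b :: "nat \<Rightarrow> (nat \<Rightarrow> nat \<Rightarrow> real) \<Rightarrow> (nat \<Rightarrow> real) \<Rightarrow> nat \<Rightarrow> real" where
  "aha_b d ys y t = 1 - \<bar>aha_yhat d ys y t\<bar>"

definition aha_v :: "nat \<Rightarrow> (nat \<Rightarrow> nat \<Rightarrow> real) \<Rightarrow> (nat \<Rightarrow> real) \<Rightarrow> nat \<Rightarrow> real" where
  "aha_v d ys y t = (\<Sum>j<d. aha_p d ys y t j *
      (clf_loss (y t) (aha_yhat d ys y t) - exp_loss ys y t j)\<^sup>2)"

end

(* The hedge loss of AdaHedge is the accumulated mixability gap Delta_T plus the accumulated
   mix loss. The mix losses telescope into a potential which, since the learning rate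
   ln d / Delta only decreases, stays below min_i L_i + Delta_T; so the regret of the hedge
   loss is at most 2 Delta_T. A Bernstein-type bound on each gap gives
   Delta_T^2 <= ln d * V + (2/3 ln d + 1) Delta_T, hence Delta_T <= sqrt (ln d * V) + 2/3 ln d + 1,
   and 2 sqrt (ln d * V) <= ln d / eta + eta V for every eta > 0. As the classification loss is
   affine, the hedge loss of round t is the loss of the weighted prediction, and the expected
   loss with abstention differs from it by exactly the remaining terms inside the infimum. *)

theory Submission
  imports Defs "HOL-Analysis.Convex"
begin

lemma two_mult_three_pow_le_fact: "2 * 3 ^ n \<le> (fact (n + 2) :: real)"
proof (induction n)
  case 0
  then show ?case by simp
next
  case (Suc n)
  have "3 * fact (n + 2) \<le> real (n + 3) * (fact (n + 2) :: real)"
    by (intro mult_right_mono) auto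
  also have "\<dots> = fact (Suc n + 2)"
    by (simp add: fact_Suc algebra_simps)
  finally have "3 * fact (n + 2) \<le> (fact (Suc n + 2) :: real)" .
  moreover have "(2::real) * 3 ^ Suc n = 3 * (2 * 3 ^ n)" by simp
  ultimately show ?case using Suc by linarith
qed

lemma exp_le_one_add_quadratic_nonneg:
  fixes x :: real
  assumes "0 \<le> x" "x < 3"
  shows "exp x \<le> 1 + x + x\<^sup>2 / (2 * (1 - x / 3))"
proof -
  have q: "norm (x / 3) < 1" using assms by simp
  have tail_le: "inverse (fact (n + 2)) * x ^ (n + 2) \<le> x\<^sup>2 / 2 * (x / 3) ^ n" for n
  proof -
    have "inverse (fact (n + 2)) * x ^ (n + 2) = x ^ (n + 2) / fact (n + 2)"
      by (simp add: field_simps)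
    also have "\<dots> \<le> x ^ (n + 2) / (2 * 3 ^ n)"
      by (intro divide_left_mono two_mult_three_pow_le_fact) (use assms in auto)
    also have "\<dots> = x\<^sup>2 / 2 * (x / 3) ^ n"
      by (simp add: power_add power_divide field_simps power2_eq_square)
    finally show ?thesis .
  qed
  have "(\<Sum>n. inverse (fact (n + 2)) * x ^ (n + 2)) \<le> (\<Sum>n. x\<^sup>2 / 2 * (x / 3) ^ n)"
  proof (rule suminf_le[OF tail_le])
    show "summable (\<lambda>n. inverse (fact (n + 2)) * x ^ (n + 2))"
      using summable_ignore_initial_segment[OF summable_exp[of x], of 2] by simp
    show "summable (\<lambda>n. x\<^sup>2 / 2 * (x / 3) ^ n)"
      by (intro summable_mult summable_geometric q)
  qed
  also have "\<dots> = x\<^sup>2 / (2 * (1 - x / 3))"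
    using suminf_mult[OF summable_geometric[OF q], of "x\<^sup>2 / 2"] suminf_geometric[OF q] by simp
  finally show ?thesis using exp_first_two_terms[of x] by simp
qed

lemma exp_le_one_add_quadratic:
  fixes x c :: real
  assumes "x \<le> c" "0 < c" "c < 3"
  shows "exp x \<le> 1 + x + x\<^sup>2 / (2 * (1 - c / 3))"
proof (cases "x \<le> 0")
  case True
  obtain t where "exp x = (\<Sum>m<3. x ^ m / fact m) + exp t / fact 3 * x ^ 3"
    using Maclaurin_exp_le[of x 3] by blast
  moreover have "exp t / fact 3 * x ^ 3 \<le> 0"
    using True by (intro mult_nonneg_nonpos) (auto simp: power_odd_eq)
  ultimately have "exp x \<le> 1 + x + x\<^sup>2 / 2"
    by (simp add: numeral_3_eq_3 power2_eq_square)
  also have "x\<^sup>2 / 2 \<le> x\<^sup>2 / (2 * (1 - c / 3))"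
    using assms by (intro divide_left_mono) auto
  finally show ?thesis by simp
next
  case False
  then have "exp x \<le> 1 + x + x\<^sup>2 / (2 * (1 - x / 3))"
    using assms by (intro exp_le_one_add_quadratic_nonneg) auto
  also have "x\<^sup>2 / (2 * (1 - x / 3)) \<le> x\<^sup>2 / (2 * (1 - c / 3))"
    using assms False by (intro divide_left_mono) auto
  finally show ?thesis by simp
qed

lemma le_sqrt_add_of_sq_le:
  fixes x a b :: real
  assumes "0 \<le> x" "0 \<le> a" "0 \<le> b" "x\<^sup>2 \<le> a + b * x"
  shows "x \<le> sqrt a + b"
proof (rule ccontr)
  assume "\<not> x \<le> sqrt a + b"
  then have x: "sqrt a + b < x" by simp
  have "0 < x" using x assms by (smt (verit) real_sqrt_ge_zero)
  have "x * (sqrt a + b) < x * x"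
    using x \<open>0 < x\<close> by (intro mult_strict_left_mono) auto
  moreover have "sqrt a * sqrt a \<le> x * sqrt a"
    using x assms by (intro mult_right_mono) auto
  ultimately have "a + b * x < x\<^sup>2"
    using assms by (simp add: power2_eq_square algebra_simps)
  then show False using assms by simp
qed

lemma two_sqrt_mult_le:
  fixes a V e :: real
  assumes "0 \<le> a" "0 \<le> V" "0 < e"
  shows "2 * sqrt (a * V) \<le> a / e + e * V"
proof -
  have "0 \<le> (sqrt (a / e) - sqrt (e * V))\<^sup>2" by simp
  also have "\<dots> = a / e + e * V - 2 * (sqrt (a / e) * sqrt (e * V))"
    using assms by (simp add: power2_diff)
  also have "sqrt (a / e) * sqrt (e * V) = sqrt (a * V)"
    using assms by (simp add: real_sqrt_mult[symmetric])
  finally show ?thesis by simp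
qed

section \<open>Hedge, mix loss and the potential\<close>

lemma ah_weights_nonneg: "0 \<le> ah_weights d L D k"
  by (auto simp: ah_weights_def Let_def intro!: divide_nonneg_nonneg sum_nonneg)

lemma ah_weights_sum: assumes "1 \<le> d" shows "(\<Sum>k<d. ah_weights d L D k) = 1"
proof (cases "D = 0")
  case True
  define M where "M = {j\<in>{..<d}. L j = (MIN k\<in>{..<d}. L k)}"
  have "(MIN k\<in>{..<d}. L k) \<in> L ` {..<d}"
    using assms by (intro Min_in) (auto simp: lessThan_empty_iff)
  then obtain j where "j < d" "L j = (MIN k\<in>{..<d}. L k)" by force
  then have "0 < card M" by (auto simp: M_def card_gt_0_iff)
  have "(\<Sum>k<d. ah_weights d L D k) = (\<Sum>k<d. if k \<in> M then 1 / real (card M) else 0)"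
    unfolding ah_weights_def Let_def M_def using True by simp
  also have "\<dots> = (\<Sum>k\<in>{..<d} \<inter> M. 1 / real (card M))"
    using sum.inter_restrict[of "{..<d}" "\<lambda>k. 1 / real (card M)" M] by simp
  also have "{..<d} \<inter> M = M" by (auto simp: M_def)
  finally show ?thesis using \<open>0 < card M\<close> by simp
next
  case False
  have "0 < (\<Sum>j<d. exp (- (ln (real d) / D) * L j))"
    using assms by (intro sum_pos) (auto simp: lessThan_empty_iff)
  then show ?thesis
    using False by (simp add: ah_weights_def sum_divide_distrib[symmetric])
qed

lemma ah_weights_const:
  assumes const: "\<And>k. k < d \<Longrightarrow> L k = c" and "k < d"
  shows "ah_weights d L 0 k = 1 / real d"
proof -
  have "L ` {..<d} = {c}" using const \<open>k < d\<close> by (auto intro!: image_eqI[of c L k])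
  then have "{j\<in>{..<d}. L j = (MIN k\<in>{..<d}. L k)} = {..<d}" using const by auto
  then show ?thesis using \<open>k < d\<close> by (simp add: ah_weights_def)
qed

lemma ah_hedge_bounds:
  assumes p_nonneg: "\<And>k. k < d \<Longrightarrow> 0 \<le> p k" and p_sum: "(\<Sum>k<d. p k) = 1"
    and l_bounded: "\<And>k. k < d \<Longrightarrow> 0 \<le> l k \<and> l k \<le> 1"
  shows "0 \<le> ah_hedge d p l" "ah_hedge d p l \<le> 1"
proof -
  show "0 \<le> ah_hedge d p l"
    unfolding ah_hedge_def using p_nonneg l_bounded by (intro sum_nonneg) auto
  have "ah_hedge d p l \<le> (\<Sum>k<d. p k * 1)"
    unfolding ah_hedge_def using p_nonneg l_bounded by (intro sum_mono mult_left_mono) auto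
  then show "ah_hedge d p l \<le> 1" using p_sum by simp
qed

definition ah_variance :: "nat \<Rightarrow> (nat \<Rightarrow> real) \<Rightarrow> (nat \<Rightarrow> real) \<Rightarrow> real" where
  "ah_variance d p l = (\<Sum>k<d. p k * (ah_hedge d p l - l k)\<^sup>2)"

lemma ah_variance_nonneg: "(\<And>k. k < d \<Longrightarrow> 0 \<le> p k) \<Longrightarrow> 0 \<le> ah_variance d p l"
  unfolding ah_variance_def by (intro sum_nonneg) auto

text \<open>The mix loss of the cumulative losses under the uniform prior at learning rate
  \<open>\<eta> = ln d / D\<close>; for \<open>D = 0\<close> its limit \<open>\<eta> \<rightarrow> \<infinity>\<close>, the minimum.\<close>
definition ah_potential :: "nat \<Rightarrow> real \<Rightarrow> (nat \<Rightarrow> real) \<Rightarrow> real" where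
  "ah_potential d D L = (if D = 0 then Min (L ` {..<d})
     else - (D / ln (real d)) * ln ((\<Sum>k<d. exp (- (ln (real d) / D) * L k)) / real d))"

lemma ah_potential_ge_Min:
  assumes "2 \<le> d" "0 < D"
  shows "Min (L ` {..<d}) \<le> ah_potential d D L"
proof -
  define \<eta> where "\<eta> = ln (real d) / D"
  define mn where "mn = Min (L ` {..<d})"
  have "0 < ln (real d)" using assms by simp
  then have \<eta>: "0 < \<eta>" using assms by (simp add: \<eta>_def)
  have "(\<Sum>k<d. exp (- \<eta> * L k)) \<le> (\<Sum>k<d. exp (- \<eta> * mn))"
    using \<eta> by (intro sum_mono) (simp add: mn_def mult_left_mono)
  then have "(\<Sum>k<d. exp (- \<eta> * L k)) / real d \<le> exp (- \<eta> * mn)"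
    using assms by (simp add: field_simps)
  moreover have "0 < (\<Sum>k<d. exp (- \<eta> * L k)) / real d"
    using assms by (intro divide_pos_pos sum_pos) (auto simp: lessThan_empty_iff)
  ultimately have "ln ((\<Sum>k<d. exp (- \<eta> * L k)) / real d) \<le> - \<eta> * mn"
    by (metis ln_exp ln_le_cancel_iff exp_gt_zero)
  then have "- (1 / \<eta>) * (- \<eta> * mn) \<le> - (1 / \<eta>) * ln ((\<Sum>k<d. exp (- \<eta> * L k)) / real d)"
    using \<eta> by (intro mult_left_mono_neg) auto
  then show ?thesis using \<eta> assms \<open>0 < ln (real d)\<close>
    by (simp add: ah_potential_def \<eta>_def mn_def)
qed

lemma ah_potential_le_Min_add:
  assumes "2 \<le> d" "0 < D"
  shows "ah_potential d D L \<le> Min (L ` {..<d}) + D"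
proof -
  define \<eta> where "\<eta> = ln (real d) / D"
  define mn where "mn = Min (L ` {..<d})"
  have "0 < ln (real d)" using assms by simp
  then have \<eta>: "0 < \<eta>" using assms by (simp add: \<eta>_def)
  have "mn \<in> L ` {..<d}"
    unfolding mn_def using assms by (intro Min_in) (auto simp: lessThan_empty_iff)
  then obtain j where "j < d" "L j = mn" by force
  then have "exp (- \<eta> * mn) \<le> (\<Sum>k<d. exp (- \<eta> * L k))"
    using member_le_sum[of j "{..<d}" "\<lambda>k. exp (- \<eta> * L k)"] by auto
  then have "ln (exp (- \<eta> * mn) / real d) \<le> ln ((\<Sum>k<d. exp (- \<eta> * L k)) / real d)"
    using assms by (intro ln_mono divide_right_mono) auto
  moreover have "ln (exp (- \<eta> * mn) / real d) = - \<eta> * mn - ln (real d)"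
    using assms by (simp add: ln_div)
  ultimately have "- (1 / \<eta>) * ln ((\<Sum>k<d. exp (- \<eta> * L k)) / real d)
      \<le> - (1 / \<eta>) * (- \<eta> * mn - ln (real d))"
    using \<eta> by (intro mult_left_mono_neg) auto
  also have "\<dots> = mn + D"
    using \<eta> assms \<open>0 < ln (real d)\<close> by (simp add: \<eta>_def field_simps)
  finally show ?thesis using assms \<open>0 < ln (real d)\<close>
    by (simp add: ah_potential_def \<eta>_def mn_def)
qed

text \<open>Decreasing the learning rate from \<open>\<eta>\<^sub>1\<close> to \<open>\<eta>\<^sub>2\<close> raises the potential by Jensen's
  inequality for the convex power \<open>x powr (\<eta>\<^sub>1 / \<eta>\<^sub>2)\<close>.\<close>
lemma ah_potential_mono_pos:
  assumes "2 \<le> d" "0 < D1" "D1 \<le> D2"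
  shows "ah_potential d D1 L \<le> ah_potential d D2 L"
proof -
  define e1 where "e1 = ln (real d) / D1"
  define e2 where "e2 = ln (real d) / D2"
  define r where "r = e1 / e2"
  define b where "b k = exp (- e2 * L k)" for k
  have ld: "0 < ln (real d)" using assms by simp
  have e2: "0 < e2" using ld assms by (simp add: e2_def)
  have e12: "e2 \<le> e1" unfolding e1_def e2_def using ld assms by (intro divide_left_mono) auto
  have "1 \<le> r" using e2 e12 by (simp add: r_def)
  have b_powr: "b k powr r = exp (- e1 * L k)" for k
    using e2 by (simp add: b_def powr_def r_def field_simps)
  have "(\<Sum>k\<in>{..<d}. (1 / real d) *\<^sub>R b k) powr r \<le> (\<Sum>k\<in>{..<d}. (1 / real d) * b k powr r)"
    by (rule convex_on_sum[OF _ _ powr_convex[OF \<open>1 \<le> r\<close>]])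
      (use assms in \<open>auto simp: b_def lessThan_empty_iff\<close>)
  then have jensen: "((\<Sum>k<d. b k) / real d) powr r \<le> (\<Sum>k<d. exp (- e1 * L k)) / real d"
    by (simp add: b_powr sum_divide_distrib[symmetric] sum_distrib_left[symmetric])
  have pos: "0 < (\<Sum>k<d. b k) / real d"
    using assms by (intro divide_pos_pos sum_pos) (auto simp: b_def lessThan_empty_iff)
  have "ln (((\<Sum>k<d. b k) / real d) powr r) \<le> ln ((\<Sum>k<d. exp (- e1 * L k)) / real d)"
    using jensen pos assms by (intro ln_mono) auto
  then have "r * ln ((\<Sum>k<d. b k) / real d) \<le> ln ((\<Sum>k<d. exp (- e1 * L k)) / real d)"
    using pos by simp
  then have "- (1 / e1) * ln ((\<Sum>k<d. exp (- e1 * L k)) / real d)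
      \<le> - (1 / e1) * (r * ln ((\<Sum>k<d. b k) / real d))"
    using e2 e12 by (intro mult_left_mono_neg) auto
  also have "\<dots> = - (1 / e2) * ln ((\<Sum>k<d. b k) / real d)"
    using e2 e12 by (simp add: r_def)
  finally show ?thesis using assms ld
    by (simp add: ah_potential_def e1_def e2_def b_def)
qed

lemma ah_potential_mono:
  assumes "0 \<le> D1" "D1 \<le> D2" "0 < D2 \<Longrightarrow> 2 \<le> d"
  shows "ah_potential d D1 L \<le> ah_potential d D2 L"
proof (cases "D1 = D2")
  case False
  then have D2: "0 < D2" "2 \<le> d" using assms by auto
  show ?thesis
  proof (cases "D1 = 0")
    case True
    then show ?thesis using ah_potential_ge_Min[OF D2(2) D2(1), of L] by (simp add: ah_potential_def)
  next
    case False
    then show ?thesis using ah_potential_mono_pos[OF D2(2), of D1 D2 L] assms by simp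
  qed
qed simp

section \<open>A single round\<close>

lemma ex_pos_of_sum_eq_1:
  assumes "(\<Sum>k<d. p k) = (1::real)"
  shows "\<exists>j<d. 0 < p j"
proof (rule ccontr)
  assume "\<not> (\<exists>j<d. 0 < p j)"
  then have "(\<Sum>k<d. p k) \<le> 0" by (intro sum_nonpos) (auto simp: not_less)
  with assms show False by simp
qed

lemma ah_mix_pos_bounds:
  assumes d: "2 \<le> d" and D: "0 < D"
    and p_nonneg: "\<And>k. k < d \<Longrightarrow> 0 \<le> p k" and p_sum: "(\<Sum>k<d. p k) = 1"
    and l_bounded: "\<And>k. k < d \<Longrightarrow> 0 \<le> l k \<and> l k \<le> 1"
  shows "0 \<le> ah_mix d p l D" "ah_mix d p l D \<le> ah_hedge d p l"
proof -
  define \<eta> where "\<eta> = ln (real d) / D"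
  define E where "E = (\<Sum>k<d. p k * exp (- \<eta> * l k))"
  have \<eta>: "0 < \<eta>" using d D by (simp add: \<eta>_def)
  have mix: "ah_mix d p l D = - (1 / \<eta>) * ln E"
    using D by (simp add: ah_mix_def \<eta>_def E_def)
  obtain j where "j < d" "0 < p j" using ex_pos_of_sum_eq_1[OF p_sum] by blast
  then have E_pos: "0 < E"
    unfolding E_def using p_nonneg by (intro sum_pos2[of "{..<d}" j]) auto
  have "E \<le> (\<Sum>k<d. p k * 1)"
    unfolding E_def using p_nonneg l_bounded \<eta> by (intro sum_mono mult_left_mono) auto
  then have "ln E \<le> 0" using E_pos p_sum by simp
  then show "0 \<le> ah_mix d p l D" using \<eta> by (simp add: mix divide_nonpos_pos)
  have "{..<d} \<noteq> {}" using d by (auto simp: lessThan_empty_iff)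
  then have "exp (\<Sum>k\<in>{..<d}. p k *\<^sub>R (- \<eta> * l k)) \<le> (\<Sum>k\<in>{..<d}. p k * exp (- \<eta> * l k))"
    by (intro convex_on_sum[OF _ _ exp_convex]) (use p_sum p_nonneg in auto)
  moreover have "(\<Sum>k\<in>{..<d}. p k *\<^sub>R (- \<eta> * l k)) = - \<eta> * ah_hedge d p l"
    by (simp add: ah_hedge_def sum_distrib_left algebra_simps)
  ultimately have "- \<eta> * ah_hedge d p l \<le> ln E"
    using E_pos by (simp add: E_def ln_ge_iff)
  then have "- (1 / \<eta>) * ln E \<le> - (1 / \<eta>) * (- \<eta> * ah_hedge d p l)"
    using \<eta> by (intro mult_left_mono_neg) auto
  then show "ah_mix d p l D \<le> ah_hedge d p l" using \<eta> by (simp add: mix)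
qed

text \<open>The gap equals \<open>(1/\<eta>) ln (\<Sum>\<^sub>k p\<^sub>k exp (\<eta> (h - l\<^sub>k)))\<close>; bound each exponential
  by its quadratic majorant and use \<open>ln x \<le> x - 1\<close>.\<close>
lemma ah_mix_gap_le_variance:
  assumes d: "2 \<le> d" and D: "0 < D" and small: "ln (real d) / D < 3"
    and p_nonneg: "\<And>k. k < d \<Longrightarrow> 0 \<le> p k" and p_sum: "(\<Sum>k<d. p k) = 1"
    and l_bounded: "\<And>k. k < d \<Longrightarrow> 0 \<le> l k \<and> l k \<le> 1"
  shows "ah_hedge d p l - ah_mix d p l D
    \<le> (ln (real d) / D) * ah_variance d p l / (2 * (1 - ln (real d) / D / 3))"
proof -
  define \<eta> where "\<eta> = ln (real d) / D"
  define c where "c = 2 * (1 - \<eta> / 3)"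
  define h where "h = ah_hedge d p l"
  define F where "F = (\<Sum>k<d. p k * exp (\<eta> * (h - l k)))"
  have \<eta>: "0 < \<eta>" using d D by (simp add: \<eta>_def)
  have \<eta>3: "\<eta> < 3" using small by (simp add: \<eta>_def)
  then have c: "0 < c" by (simp add: c_def)
  have mix: "ah_mix d p l D = - (1 / \<eta>) * ln (\<Sum>k<d. p k * exp (- \<eta> * l k))"
    using D by (simp add: ah_mix_def \<eta>_def)
  have EF: "(\<Sum>k<d. p k * exp (- \<eta> * l k)) = exp (- \<eta> * h) * F"
    unfolding F_def sum_distrib_left
    by (intro sum.cong refl) (simp add: algebra_simps exp_add[symmetric])
  obtain j where "j < d" "0 < p j" using ex_pos_of_sum_eq_1[OF p_sum] by blast
  then have "0 < F"
    unfolding F_def using p_nonneg by (intro sum_pos2[of "{..<d}" j]) auto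
  then have "ln (\<Sum>k<d. p k * exp (- \<eta> * l k)) = - \<eta> * h + ln F"
    unfolding EF by (simp add: ln_mult)
  then have "ah_mix d p l D = - (1 / \<eta>) * (- \<eta> * h + ln F)" by (simp only: mix)
  then have gap: "h - ah_mix d p l D = (1 / \<eta>) * ln F"
    using \<eta> by (simp add: field_simps)
  have h_le: "h \<le> 1" using ah_hedge_bounds[where l=l, OF p_nonneg p_sum l_bounded] by (simp add: h_def)
  have "F \<le> (\<Sum>k<d. p k * (1 + \<eta> * (h - l k) + (\<eta> * (h - l k))\<^sup>2 / c))"
    unfolding F_def c_def
  proof (intro sum_mono mult_left_mono)
    fix k assume "k \<in> {..<d}"
    then have "\<eta> * (h - l k) \<le> \<eta>" using l_bounded[of k] h_le \<eta> by (simp add: mult_left_le)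
    then show "exp (\<eta> * (h - l k)) \<le> 1 + \<eta> * (h - l k) + (\<eta> * (h - l k))\<^sup>2 / (2 * (1 - \<eta> / 3))"
      using \<eta> \<eta>3 by (intro exp_le_one_add_quadratic) auto
  qed (use p_nonneg in auto)
  also have "\<dots> = (\<Sum>k<d. p k + \<eta> * (h * p k - p k * l k) + \<eta>\<^sup>2 / c * (p k * (h - l k)\<^sup>2))"
    using c by (intro sum.cong refl) (subst power_mult_distrib, simp add: field_simps)
  also have "\<dots> = (\<Sum>k<d. p k) + \<eta> * (h * (\<Sum>k<d. p k) - (\<Sum>k<d. p k * l k))
      + \<eta>\<^sup>2 / c * ah_variance d p l"
    by (simp add: ah_variance_def h_def[symmetric] sum.distrib sum_distrib_left
        sum_subtractf[symmetric] right_diff_distrib)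
  also have "\<dots> = 1 + \<eta>\<^sup>2 / c * ah_variance d p l"
    using p_sum by (simp add: h_def ah_hedge_def)
  finally have "ln F \<le> \<eta>\<^sup>2 / c * ah_variance d p l"
    using ln_le_minus_one[OF \<open>0 < F\<close>] by linarith
  then have "(1 / \<eta>) * ln F \<le> (1 / \<eta>) * (\<eta>\<^sup>2 / c * ah_variance d p l)"
    using \<eta> by (intro mult_left_mono) auto
  also have "(1 / \<eta>) * (\<eta>\<^sup>2 / c * ah_variance d p l) = \<eta> * ah_variance d p l / c"
    using \<eta> by (simp add: power2_eq_square)
  finally have "h - ah_mix d p l D \<le> \<eta> * ah_variance d p l / c" using gap by simp
  then show ?thesis by (simp only: h_def c_def \<eta>_def)
qed

lemma ah_mix_gap_bernstein:
  assumes d: "2 \<le> d" and D: "0 < D"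
    and p_nonneg: "\<And>k. k < d \<Longrightarrow> 0 \<le> p k" and p_sum: "(\<Sum>k<d. p k) = 1"
    and l_bounded: "\<And>k. k < d \<Longrightarrow> 0 \<le> l k \<and> l k \<le> 1"
  defines "\<delta> \<equiv> ah_hedge d p l - ah_mix d p l D"
  shows "2 * \<delta> * D + \<delta>\<^sup>2 \<le> ln (real d) * ah_variance d p l + (2/3 * ln (real d) + 1) * \<delta>"
proof -
  define \<eta> where "\<eta> = ln (real d) / D"
  define v where "v = ah_variance d p l"
  have ld: "0 < ln (real d)" using d by simp
  have \<eta>: "0 < \<eta>" using ld D by (simp add: \<eta>_def)
  have D_eq: "D = ln (real d) / \<eta>" using ld D by (simp add: \<eta>_def)
  have v: "0 \<le> v" unfolding v_def using p_nonneg by (rule ah_variance_nonneg)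
  note mix = ah_mix_pos_bounds[where l=l, OF d D p_nonneg p_sum l_bounded]
  have "0 \<le> \<delta>" "\<delta> \<le> 1"
    using mix ah_hedge_bounds[where l=l, OF p_nonneg p_sum l_bounded] by (auto simp: \<delta>_def)
  then have sq: "\<delta>\<^sup>2 \<le> \<delta>" by (simp add: power2_eq_square mult_left_le)
  have rhs: "(2/3 * ln (real d) + 1) * \<delta> = 2/3 * ln (real d) * \<delta> + \<delta>" by (simp add: algebra_simps)
  show ?thesis
  proof (cases "3 \<le> \<eta>")
    case True
    have "2 * \<delta> * D = 2 * \<delta> * ln (real d) / \<eta>" by (simp add: D_eq)
    also have "\<dots> \<le> 2 * \<delta> * ln (real d) / 3"
      using True \<open>0 \<le> \<delta>\<close> ld by (intro divide_left_mono) auto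
    also have "\<dots> = 2/3 * ln (real d) * \<delta>" by simp
    finally have "2 * \<delta> * D \<le> 2/3 * ln (real d) * \<delta>" .
    moreover have "0 \<le> ln (real d) * v" using v ld by simp
    ultimately show ?thesis using sq rhs unfolding v_def by linarith
  next
    case False
    define c where "c = 2 * (1 - \<eta> / 3)"
    have c: "0 < c" using False by (simp add: c_def)
    have "\<delta> \<le> \<eta> * v / c"
      using ah_mix_gap_le_variance[OF d D _ p_nonneg p_sum l_bounded] False
      by (simp add: \<delta>_def v_def c_def \<eta>_def)
    then have "\<delta> * (c / \<eta>) \<le> v"
      using c \<eta> by (simp add: field_simps)
    then have "ln (real d) * (\<delta> * (c / \<eta>)) \<le> ln (real d) * v"
      using ld by (intro mult_left_mono) auto
    moreover have "ln (real d) * (\<delta> * (c / \<eta>)) = 2 * \<delta> * D - 2/3 * ln (real d) * \<delta>"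
      using \<eta> by (simp add: D_eq c_def field_simps)
    ultimately show ?thesis using sq rhs unfolding v_def by linarith
  qed
qed

lemma ah_mix_eq_potential_diff:
  assumes "1 \<le> d" "0 < D"
  shows "ah_mix d (ah_weights d L D) l D
    = ah_potential d D (\<lambda>k. L k + l k) - ah_potential d D L"
proof -
  define \<eta> where "\<eta> = ln (real d) / D"
  define S where "S = (\<Sum>k<d. exp (- \<eta> * L k))"
  define S' where "S' = (\<Sum>k<d. exp (- \<eta> * (L k + l k)))"
  have "{..<d} \<noteq> {}" using assms by (auto simp: lessThan_empty_iff)
  then have "0 < S" "0 < S'" unfolding S_def S'_def by (auto intro!: sum_pos)
  have "(\<Sum>k<d. ah_weights d L D k * exp (- \<eta> * l k)) = S' / S"
    unfolding S'_def sum_divide_distrib using assms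
    by (intro sum.cong refl)
      (simp add: ah_weights_def \<eta>_def S_def algebra_simps add_divide_distrib exp_add[symmetric])
  then have "ah_mix d (ah_weights d L D) l D = - (1 / \<eta>) * ln (S' / S)"
    using assms by (simp add: ah_mix_def \<eta>_def)
  also have "ln (S' / S) = ln (S' / real d) - ln (S / real d)"
    using \<open>0 < S\<close> \<open>0 < S'\<close> assms by (simp add: ln_div)
  finally show ?thesis
    using assms by (simp add: ah_potential_def \<eta>_def S_def S'_def right_diff_distrib)
qed

lemma ah_mix_uniform:
  assumes "1 \<le> d" and uniform: "\<And>k. k < d \<Longrightarrow> p k = 1 / real d"
  shows "ah_mix d p l 0 = Min (l ` {..<d})"
proof -
  have "{k\<in>{..<d}. 0 < p k} = {..<d}" using uniform assms by auto
  then show ?thesis by (simp add: ah_mix_def)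
qed

lemma ah_hedge_uniform:
  assumes uniform: "\<And>k. k < d \<Longrightarrow> p k = 1 / real d"
  shows "ah_hedge d p l = (\<Sum>k<d. l k) / real d"
  by (simp add: ah_hedge_def uniform sum_divide_distrib)

text \<open>While \<open>\<Delta> = 0\<close> the learning rate is infinite and the analysis relies on all experts being
  tied; a positive \<open>\<Delta>\<close> can only arise when there are at least two experts.\<close>
definition ah_state_ok :: "nat \<Rightarrow> real \<Rightarrow> (nat \<Rightarrow> real) \<Rightarrow> bool" where
  "ah_state_ok d D L \<longleftrightarrow> 0 \<le> D \<and> (0 < D \<longrightarrow> 2 \<le> d) \<and> (D = 0 \<longrightarrow> (\<exists>c. \<forall>k<d. L k = c))"

lemma ah_round_tied:
  assumes d: "1 \<le> d" and tied: "\<And>k. k < d \<Longrightarrow> L k = c"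
    and l_bounded: "\<And>k. k < d \<Longrightarrow> 0 \<le> l k \<and> l k \<le> 1"
  defines "p \<equiv> ah_weights d L 0"
  defines "\<delta> \<equiv> ah_hedge d p l - ah_mix d p l 0"
  shows "0 \<le> \<delta>" "\<delta> \<le> 1"
    "ah_mix d p l 0 = ah_potential d 0 (\<lambda>k. L k + l k) - ah_potential d 0 L"
    "ah_state_ok d \<delta> (\<lambda>k. L k + l k)"
proof -
  define mn where "mn = Min (l ` {..<d})"
  have uniform: "\<And>k. k < d \<Longrightarrow> p k = 1 / real d"
    unfolding p_def using tied by (rule ah_weights_const)
  have mix: "ah_mix d p l 0 = mn"
    using ah_mix_uniform[OF d uniform] by (simp add: mn_def)
  have mn_le: "\<And>k. k < d \<Longrightarrow> mn \<le> l k" by (simp add: mn_def)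
  have "mn \<in> l ` {..<d}"
    unfolding mn_def using d by (intro Min_in) (auto simp: lessThan_empty_iff)
  then obtain j where j: "j < d" "l j = mn" by force
  have excess: "\<delta> = (\<Sum>k<d. l k - mn) / real d"
    using d by (simp add: \<delta>_def mix ah_hedge_uniform[OF uniform] sum_subtractf field_simps)
  show "0 \<le> \<delta>"
    unfolding excess using mn_le by (intro divide_nonneg_nonneg sum_nonneg) auto
  have "ah_hedge d p l \<le> 1"
    using ah_hedge_bounds[where l=l, OF _ _ l_bounded] ah_weights_nonneg ah_weights_sum[OF d]
    by (simp add: p_def)
  moreover have "0 \<le> mn" using j l_bounded by force
  ultimately show "\<delta> \<le> 1" by (simp add: \<delta>_def mix)
  have "Min ((\<lambda>k. L k + l k) ` {..<d}) = c + mn"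
    by (rule Min_eqI) (use tied mn_le j in auto)
  moreover have "Min (L ` {..<d}) = c"
    by (rule Min_eqI) (use tied j in auto)
  ultimately show "ah_mix d p l 0 = ah_potential d 0 (\<lambda>k. L k + l k) - ah_potential d 0 L"
    by (simp add: ah_potential_def mix)
  have "2 \<le> d" if "0 < \<delta>"
  proof (rule ccontr)
    assume "\<not> 2 \<le> d"
    then have "{..<d} = {j}" using d j by auto
    then show False using that j by (simp add: excess)
  qed
  moreover have "\<exists>c'. \<forall>k<d. L k + l k = c'" if "\<delta> = 0"
  proof -
    have "(\<Sum>k<d. l k - mn) = 0" using that d by (simp add: excess)
    then have "\<forall>k\<in>{..<d}. l k - mn = 0"
      using mn_le by (subst sum_nonneg_eq_0_iff[symmetric]) auto
    then show ?thesis using tied by auto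
  qed
  ultimately show "ah_state_ok d \<delta> (\<lambda>k. L k + l k)"
    using \<open>0 \<le> \<delta>\<close> by (auto simp: ah_state_ok_def)
qed

lemma ah_round:
  assumes d: "1 \<le> d" and state: "ah_state_ok d D L"
    and l_bounded: "\<And>k. k < d \<Longrightarrow> 0 \<le> l k \<and> l k \<le> 1"
  defines "p \<equiv> ah_weights d L D"
  defines "\<delta> \<equiv> ah_hedge d p l - ah_mix d p l D"
  shows "0 \<le> \<delta>"
    "2 * \<delta> * D + \<delta>\<^sup>2 \<le> ln (real d) * ah_variance d p l + (2/3 * ln (real d) + 1) * \<delta>"
    "ah_mix d p l D = ah_potential d D (\<lambda>k. L k + l k) - ah_potential d D L"
    "ah_state_ok d (D + \<delta>) (\<lambda>k. L k + l k)"
proof -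
  have p_nonneg: "\<And>k. k < d \<Longrightarrow> 0 \<le> p k" and p_sum: "(\<Sum>k<d. p k) = 1"
    using ah_weights_nonneg ah_weights_sum[OF d] by (simp_all add: p_def)
  have "0 \<le> \<delta> \<and> 2 * \<delta> * D + \<delta>\<^sup>2 \<le> ln (real d) * ah_variance d p l + (2/3 * ln (real d) + 1) * \<delta>
    \<and> ah_mix d p l D = ah_potential d D (\<lambda>k. L k + l k) - ah_potential d D L
    \<and> ah_state_ok d (D + \<delta>) (\<lambda>k. L k + l k)"
  proof (cases "D = 0")
    case True
    then obtain c where c: "\<And>k. k < d \<Longrightarrow> L k = c" using state by (auto simp: ah_state_ok_def)
    have p0: "p = ah_weights d L 0" and \<delta>0: "\<delta> = ah_hedge d p l - ah_mix d p l 0"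
      by (simp_all add: p_def \<delta>_def True)
    note tied = ah_round_tied[where L=L and l=l and c=c, OF d c l_bounded, folded p0, folded \<delta>0]
    have "\<delta>\<^sup>2 \<le> \<delta>" using tied(1,2) by (simp add: power2_eq_square mult_left_le)
    moreover have "0 \<le> ln (real d) * ah_variance d p l"
      using d p_nonneg by (simp add: ah_variance_nonneg)
    moreover have "0 \<le> 2/3 * ln (real d) * \<delta>" using d tied(1) by simp
    moreover have "(2/3 * ln (real d) + 1) * \<delta> = 2/3 * ln (real d) * \<delta> + \<delta>"
      by (simp add: algebra_simps)
    moreover have "2 * \<delta> * D = 0" using True by simp
    ultimately have "2 * \<delta> * D + \<delta>\<^sup>2
        \<le> ln (real d) * ah_variance d p l + (2/3 * ln (real d) + 1) * \<delta>"
      by linarith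
    then show ?thesis using tied True by simp
  next
    case False
    then have D: "0 < D" and "2 \<le> d" using state by (auto simp: ah_state_ok_def)
    then show ?thesis
      using ah_mix_pos_bounds[where l=l, OF \<open>2 \<le> d\<close> D p_nonneg p_sum l_bounded]
        ah_mix_gap_bernstein[where l=l, OF \<open>2 \<le> d\<close> D p_nonneg p_sum l_bounded]
        ah_mix_eq_potential_diff[OF d D, of L l]
      by (auto simp: \<delta>_def p_def ah_state_ok_def)
  qed
  then show "0 \<le> \<delta>"
    "2 * \<delta> * D + \<delta>\<^sup>2 \<le> ln (real d) * ah_variance d p l + (2/3 * ln (real d) + 1) * \<delta>"
    "ah_mix d p l D = ah_potential d D (\<lambda>k. L k + l k) - ah_potential d D L"
    "ah_state_ok d (D + \<delta>) (\<lambda>k. L k + l k)" by auto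
qed

section \<open>A run of AdaHedge\<close>

lemma cum_loss_Suc: "1 \<le> n \<Longrightarrow> cum_loss f (Suc n) k = cum_loss f n k + f n k"
  by (simp add: cum_loss_def atLeastLessThanSuc)

locale adahedge_run =
  fixes d T :: nat and lossf :: "nat \<Rightarrow> nat \<Rightarrow> real"
  assumes d_pos: "1 \<le> d"
    and loss_bounded: "\<And>t k. t \<in> {1..T} \<Longrightarrow> k < d \<Longrightarrow> 0 \<le> lossf t k \<and> lossf t k \<le> 1"
begin

abbreviation "Delta t \<equiv> ah_Delta d lossf t"
abbreviation "cumL t \<equiv> cum_loss lossf t"
abbreviation "weights t \<equiv> ah_p d lossf t"
abbreviation "hedge t \<equiv> ah_hedge d (weights t) (lossf t)"
abbreviation "mix t \<equiv> ah_mix d (weights t) (lossf t) (Delta (t - 1))"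
abbreviation "variance t \<equiv> ah_variance d (weights t) (lossf t)"

lemma Delta_Suc: "Delta (Suc t) = Delta t + (hedge (Suc t) - mix (Suc t))"
  by (simp add: ah_p_def Let_def)

declare ah_Delta.simps(2) [simp del]

lemma weights_Suc: "weights (Suc t) = ah_weights d (cumL (Suc t)) (Delta t)"
  by (simp add: ah_p_def)

lemma loss_bounded_Suc: "t < T \<Longrightarrow> k < d \<Longrightarrow> 0 \<le> lossf (Suc t) k \<and> lossf (Suc t) k \<le> 1"
  using loss_bounded by simp

lemma cumL_Suc_Suc: "(\<lambda>k. cumL (Suc t) k + lossf (Suc t) k) = cumL (Suc (Suc t))"
  by (simp add: cum_loss_Suc fun_eq_iff)

lemma round_step:
  assumes "t < T" and state: "ah_state_ok d (Delta t) (cumL (Suc t))"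
  shows "0 \<le> hedge (Suc t) - mix (Suc t)"
    "2 * (hedge (Suc t) - mix (Suc t)) * Delta t + (hedge (Suc t) - mix (Suc t))\<^sup>2
      \<le> ln (real d) * variance (Suc t) + (2/3 * ln (real d) + 1) * (hedge (Suc t) - mix (Suc t))"
    "mix (Suc t)
      = ah_potential d (Delta t) (cumL (Suc (Suc t))) - ah_potential d (Delta t) (cumL (Suc t))"
    "ah_state_ok d (Delta (Suc t)) (cumL (Suc (Suc t)))"
  using ah_round[where l = "lossf (Suc t)", OF d_pos state loss_bounded_Suc[OF assms(1)],
      folded weights_Suc]
  unfolding cumL_Suc_Suc by (simp_all add: Delta_Suc)

lemma state_ok: "t \<le> T \<Longrightarrow> ah_state_ok d (Delta t) (cumL (Suc t))"
proof (induction t)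
  case 0
  show ?case by (simp add: ah_state_ok_def cum_loss_def)
next
  case (Suc t)
  then show ?case using round_step(4)[of t] by simp
qed

lemma Delta_eq_sum_gaps: "Delta n = (\<Sum>t=1..n. hedge t - mix t)"
  by (induction n) (simp_all add: Delta_Suc)

lemma sum_mix_le_potential:
  "n \<le> T \<Longrightarrow> (\<Sum>t=1..n. mix t) \<le> ah_potential d (Delta n) (cumL (Suc n))"
proof (induction n)
  case 0
  have "(\<lambda>k::nat. 0::real) ` {..<d} = {0}"
    using d_pos by (simp add: image_constant_conv lessThan_empty_iff)
  then show ?case by (simp add: ah_potential_def cum_loss_def)
next
  case (Suc n)
  then have "n < T" by simp
  note step = round_step[OF this state_ok]
  have "(\<Sum>t=1..Suc n. mix t) \<le> ah_potential d (Delta n) (cumL (Suc n)) + mix (Suc n)"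
    using Suc by simp
  also have "\<dots> = ah_potential d (Delta n) (cumL (Suc (Suc n)))"
    using step(3) \<open>n < T\<close> by simp
  also have "\<dots> \<le> ah_potential d (Delta (Suc n)) (cumL (Suc (Suc n)))"
  proof (rule ah_potential_mono)
    show "0 \<le> Delta n" using state_ok[of n] \<open>n < T\<close> by (simp add: ah_state_ok_def)
    show "Delta n \<le> Delta (Suc n)" using step(1) \<open>n < T\<close> by (simp add: Delta_Suc)
    show "0 < Delta (Suc n) \<Longrightarrow> 2 \<le> d" using step(4) \<open>n < T\<close> by (simp add: ah_state_ok_def)
  qed
  finally show ?case .
qed

lemma sum_hedge_le_two_Delta:
  assumes "i < d"
  shows "(\<Sum>t=1..T. hedge t) \<le> cumL (Suc T) i + 2 * Delta T"
proof -
  have "(\<Sum>t=1..T. hedge t) = Delta T + (\<Sum>t=1..T. mix t)"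
    by (subst Delta_eq_sum_gaps) (simp add: sum_subtractf)
  also have "\<dots> \<le> Delta T + ah_potential d (Delta T) (cumL (Suc T))"
    using sum_mix_le_potential[of T] by simp
  also have "ah_potential d (Delta T) (cumL (Suc T)) \<le> Min (cumL (Suc T) ` {..<d}) + Delta T"
  proof (cases "Delta T = 0")
    case False
    then have "0 < Delta T" "2 \<le> d" using state_ok[of T] by (auto simp: ah_state_ok_def)
    then show ?thesis by (rule ah_potential_le_Min_add[rotated])
  qed (simp add: ah_potential_def)
  also have "Min (cumL (Suc T) ` {..<d}) \<le> cumL (Suc T) i" using assms by simp
  finally show ?thesis by simp
qed

lemma Delta_sq_le:
  "n \<le> T \<Longrightarrow> (Delta n)\<^sup>2 \<le> ln (real d) * (\<Sum>t=1..n. variance t) + (2/3 * ln (real d) + 1) * Delta n"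
proof (induction n)
  case (Suc n)
  then have "n < T" by simp
  define \<delta> where "\<delta> = hedge (Suc n) - mix (Suc n)"
  have "(Delta (Suc n))\<^sup>2 = (Delta n)\<^sup>2 + (2 * \<delta> * Delta n + \<delta>\<^sup>2)"
    by (simp add: Delta_Suc \<delta>_def power2_eq_square algebra_simps)
  also have "\<dots> \<le> ln (real d) * (\<Sum>t=1..n. variance t) + (2/3 * ln (real d) + 1) * Delta n
      + (ln (real d) * variance (Suc n) + (2/3 * ln (real d) + 1) * \<delta>)"
    using Suc.IH round_step(2)[OF \<open>n < T\<close> state_ok] \<open>n < T\<close> unfolding \<delta>_def
    by (simp add: add_mono)
  also have "\<dots> = ln (real d) * (\<Sum>t=1..Suc n. variance t) + (2/3 * ln (real d) + 1) * Delta (Suc n)"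
    by (simp add: Delta_Suc \<delta>_def algebra_simps)
  finally show ?case .
qed simp

lemma hedge_regret_le:
  assumes "i < d" "0 < \<eta>"
  shows "(\<Sum>t=1..T. hedge t) - cumL (Suc T) i
    \<le> ln (real d) / \<eta> + \<eta> * (\<Sum>t=1..T. variance t) + 4/3 * ln (real d) + 2"
proof -
  define V where "V = (\<Sum>t=1..T. variance t)"
  have "0 \<le> V"
    unfolding V_def by (intro sum_nonneg ah_variance_nonneg) (simp add: ah_p_def ah_weights_nonneg)
  have "0 \<le> ln (real d)" using d_pos by simp
  have "Delta T \<le> sqrt (ln (real d) * V) + (2/3 * ln (real d) + 1)"
    using le_sqrt_add_of_sq_le[OF _ _ _ Delta_sq_le[of T, folded V_def]] state_ok[of T]
      \<open>0 \<le> V\<close> \<open>0 \<le> ln (real d)\<close> by (simp add: ah_state_ok_def)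
  moreover have "2 * sqrt (ln (real d) * V) \<le> ln (real d) / \<eta> + \<eta> * V"
    using two_sqrt_mult_le[OF \<open>0 \<le> ln (real d)\<close> \<open>0 \<le> V\<close> assms(2)] .
  ultimately show ?thesis using sum_hedge_le_two_Delta[OF assms(1)] unfolding V_def by linarith
qed

end

section \<open>Abstention\<close>

lemma exp_loss_bounded:
  assumes "ys t j \<in> {-1..1}" "y t \<in> {-1, 1}"
  shows "0 \<le> exp_loss ys y t j \<and> exp_loss ys y t j \<le> 1"
  using assms by (auto simp: exp_loss_def clf_loss_def)

text \<open>The loss is affine in the prediction and the weights sum to one.\<close>
lemma clf_loss_aha_yhat:
  assumes "1 \<le> d"
  shows "clf_loss (y t) (aha_yhat d ys y t) = ah_hedge d (aha_p d ys y t) (exp_loss ys y t)"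
proof -
  let ?p = "aha_p d ys y t"
  have "(\<Sum>k<d. ?p k) = 1" using ah_weights_sum[OF assms] by (simp add: aha_p_def ah_p_def)
  then have "clf_loss (y t) (aha_yhat d ys y t) = (\<Sum>k<d. ?p k) / 2 - y t * (\<Sum>k<d. ?p k * ys t k) / 2"
    by (simp add: clf_loss_def aha_yhat_def diff_divide_distrib)
  also have "\<dots> = (\<Sum>k<d. ?p k * exp_loss ys y t k)"
    by (simp add: exp_loss_def clf_loss_def sum_divide_distrib sum_distrib_left
        sum_subtractf[symmetric] field_simps)
  finally show ?thesis by (simp add: ah_hedge_def)
qed

lemma aha_v_eq_variance:
  "1 \<le> d \<Longrightarrow> aha_v d ys y t = ah_variance d (aha_p d ys y t) (exp_loss ys y t)"
  by (simp add: aha_v_def ah_variance_def clf_loss_aha_yhat)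

theorem mainTheorem9:
  fixes d T :: nat
    and ys :: "nat \<Rightarrow> nat \<Rightarrow> real"
    and y :: "nat \<Rightarrow> real"
    and c :: "nat \<Rightarrow> real"
    and i :: nat
  assumes d_pos: "d \<ge> 1"
    and preds: "\<And>t j. t \<in> {1..T} \<Longrightarrow> j < d \<Longrightarrow> ys t j \<in> {-1..1}"
    and labels: "\<And>t. t \<in> {1..T} \<Longrightarrow> y t \<in> {-1, 1}"
    and i_expert: "i < d"
  shows "(\<Sum>t=1..T. (1 - aha_b d ys y t) * clf_loss (y t) (aha_ystar d ys y t) + aha_b d ys y t * c t)
     \<le> (\<Sum>t=1..T. exp_loss ys y t i)
        + (INF \<eta>\<in>{0<..}. ln (real d) / \<eta>
             + (\<Sum>t=1..T. (1 - aha_b d ys y t) * clf_loss (y t) (aha_ystar d ys y t)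
                           + c t * aha_b d ys y t + \<eta> * aha_v d ys y t
                           - clf_loss (y t) (aha_yhat d ys y t)))
        + 4/3 * ln (real d) + 2"
proof -
  interpret adahedge_run d T "exp_loss ys y"
    using d_pos preds labels exp_loss_bounded by unfold_locales auto
  define A where "A = (\<Sum>t=1..T. (1 - aha_b d ys y t) * clf_loss (y t) (aha_ystar d ys y t)
    + aha_b d ys y t * c t)"
  define H where "H = (\<Sum>t=1..T. clf_loss (y t) (aha_yhat d ys y t))"
  define V where "V = (\<Sum>t=1..T. aha_v d ys y t)"
  define Li where "Li = (\<Sum>t=1..T. exp_loss ys y t i)"
  have "H - Li \<le> ln (real d) / \<eta> + \<eta> * V + 4/3 * ln (real d) + 2" if "0 < \<eta>" for \<eta>
    using hedge_regret_le[OF i_expert that] d_pos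
    by (simp add: H_def V_def Li_def clf_loss_aha_yhat aha_v_eq_variance aha_p_def
        cum_loss_def atLeastLessThanSuc_atLeastAtMost)
  moreover have "(\<Sum>t=1..T. (1 - aha_b d ys y t) * clf_loss (y t) (aha_ystar d ys y t)
      + c t * aha_b d ys y t + \<eta> * aha_v d ys y t - clf_loss (y t) (aha_yhat d ys y t))
      = A + \<eta> * V - H" for \<eta>
    by (simp add: A_def H_def V_def sum.distrib sum_subtractf sum_distrib_left mult.commute)
  ultimately have "A - Li - 4/3 * ln (real d) - 2 \<le> (INF \<eta>\<in>{0<..}. ln (real d) / \<eta>
      + (\<Sum>t=1..T. (1 - aha_b d ys y t) * clf_loss (y t) (aha_ystar d ys y t)
          + c t * aha_b d ys y t + \<eta> * aha_v d ys y t - clf_loss (y t) (aha_yhat d ys y t)))"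
    by (intro cINF_greatest) fastforce+
  then show ?thesis by (simp add: A_def Li_def)
qed

end
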